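(* Let $n\in\mathbb{Z}$ with $|n|\geq1$, $\alpha>0$, $\kappa<\alpha^{-1}$ and $\beta>0$. If $$R>\left(\frac{12\,(1+n^2(2\ln 2-1))}{\alpha^{-1}-\kappa}\right)^{1/2},$$ then there exists $u_0\in H$ such that $\|u_0\|_H^2>\beta$ and $\mathcal{I}_\kappa(u_0)<0$.
   Context: $H$ is the completion of $X=\{u\in C^1[0,R]: u(0)=0=u(R)\}$ with respect to the inner product $(u,\tilde u)=\int_0^R\left\{ru_r\tilde u_r+\frac1r u\tilde u\right\}dr$, and $\|\cdot\|_H$ is the induced norm. The functional $\mathcal{I}_\kappa:H\to\mathbb{R}$ is $$\mathcal{I}_\kappa(u)=\frac12\int_0^R\left\{ru_r^2+\frac{n^2}{r}u^2-2(\alpha^{-1}-\kappa)ru^2+2\alpha^{-2}r\ln(1+\alpha u^2)\right\}dr.$$ *)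

theory Defs
  imports "HOL-Analysis.Analysis"
begin

definition inX :: "real \<Rightarrow> (real \<Rightarrow> real) \<Rightarrow> (real \<Rightarrow> real) \<Rightarrow> bool" where
  "inX R u u' \<longleftrightarrow> continuous_on {0..R} u'
     \<and> (\<forall>x\<in>{0..R}. (u has_real_derivative u' x) (at x within {0..R}))
     \<and> u 0 = 0 \<and> u R = 0"

text \<open>Squared H-distance between (u,v) and (w,z), where the second component plays
  the role of the (weak) derivative; valued in ennreal so that it is always defined.\<close>
definition distH2 :: "real \<Rightarrow> (real \<Rightarrow> real) \<Rightarrow> (real \<Rightarrow> real) \<Rightarrow> (real \<Rightarrow> real) \<Rightarrow> (real \<Rightarrow> real) \<Rightarrow> ennreal" where
  "distH2 R u v w z = (\<integral>\<^sup>+ r\<in>{0<..<R}. ennreal (r * (v r - z r)^2 + (u r - w r)^2 / r) \<partial>lborel)"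

text \<open>H = completion of X: pairs (u, u_r) of measurable functions which are H-limits of
  elements of X.\<close>
definition inH :: "real \<Rightarrow> (real \<Rightarrow> real) \<Rightarrow> (real \<Rightarrow> real) \<Rightarrow> bool" where
  "inH R u v \<longleftrightarrow> u \<in> borel_measurable lborel \<and> v \<in> borel_measurable lborel
     \<and> (\<exists>uk vk. (\<forall>k::nat. inX R (uk k) (vk k))
          \<and> ((\<lambda>k. distH2 R (uk k) (vk k) u v) \<longlonglongrightarrow> 0))"

definition normH2 :: "real \<Rightarrow> (real \<Rightarrow> real) \<Rightarrow> (real \<Rightarrow> real) \<Rightarrow> real" where
  "normH2 R u v = (LINT r:{0<..<R}|lborel. r * (v r)^2 + (u r)^2 / r)"

definition Ikappa :: "int \<Rightarrow> real \<Rightarrow> real \<Rightarrow> real \<Rightarrow> (real \<Rightarrow> real) \<Rightarrow> (real \<Rightarrow> real) \<Rightarrow> real" where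
  "Ikappa n \<alpha> \<kappa> R u v = (1/2) * (LINT r:{0<..<R}|lborel.
      r * (v r)^2 + (real_of_int n)^2 / r * (u r)^2 - 2 * (1/\<alpha> - \<kappa>) * r * (u r)^2
      + 2 * (1/\<alpha>^2) * r * ln (1 + \<alpha> * (u r)^2))"

end

theory Submission
  imports Defs
begin

text \<open>The test functions are the multiples \<open>t r\<^sup>2 (R - r)\<close> of one fixed polynomial profile.
  Along this ray the quadratic part of \<open>\<I>\<^sub>\<kappa>\<close> is \<open>-t\<^sup>2 D\<close> with
  \<open>D = R\<^sup>6 ((\<alpha>\<^sup>-\<^sup>1 - \<kappa>) R\<^sup>2/84 - 1/10 - n\<^sup>2/60)\<close>, which is positive under the hypothesis on \<open>R\<close>,
  whereas the logarithmic term grows only like \<open>ln t\<close>. Hence for large \<open>t\<close> the functional is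
  negative while the norm \<open>7 t\<^sup>2 R\<^sup>6/60\<close> exceeds any given \<open>\<beta>\<close>.\<close>

lemma set_integral_greaterThanLessThan_FTC:
  fixes f F :: "real \<Rightarrow> real"
  assumes "a \<le> b" "continuous_on {a..b} f"
    "\<And>x. a \<le> x \<Longrightarrow> x \<le> b \<Longrightarrow> (F has_real_derivative f x) (at x within {a..b})"
  shows "(LINT x:{a<..<b}|lborel. f x) = F b - F a"
proof -
  have "(LBINT x=ereal a..ereal b. f x) = F b - F a"
    using assms by (intro interval_integral_FTC_finite)
      (auto simp: min_def max_def has_real_derivative_iff_has_vector_derivative[symmetric])
  thus ?thesis using assms(1) by (simp add: interval_lebesgue_integral_def)
qed

lemma set_integrable_greaterThanLessThan:
  fixes f :: "real \<Rightarrow> real"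
  assumes "continuous_on {a..b} f"
  shows "set_integrable lborel {a<..<b} f"
  by (rule set_integrable_subset[OF borel_integrable_atLeastAtMost'[OF assms]]) auto

lemma inH_if_inX:
  assumes "inX R u v" "u \<in> borel_measurable lborel" "v \<in> borel_measurable lborel"
  shows "inH R u v"
  unfolding inH_def using assms
  by (intro conjI exI[of _ "\<lambda>_. u"] exI[of _ "\<lambda>_. v"]) (simp_all add: distH2_def)

lemma inH_cubic_profile:
  "inH R (\<lambda>r. t * (r\<^sup>2 * (R - r))) (\<lambda>r. t * (2*R*r - 3*r\<^sup>2))"
proof (rule inH_if_inX)
  show "inX R (\<lambda>r. t * (r\<^sup>2 * (R - r))) (\<lambda>r. t * (2*R*r - 3*r\<^sup>2))"
    unfolding inX_def
    apply (intro conjI ballI continuous_intros)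
      apply (rule derivative_eq_intros refl | simp)+
    by (simp_all add: algebra_simps power2_eq_square)
qed auto

lemma normH2_cubic_profile:
  assumes "R \<ge> 0"
  shows "normH2 R (\<lambda>r. t * (r\<^sup>2 * (R - r))) (\<lambda>r. t * (2*R*r - 3*r\<^sup>2)) = t\<^sup>2 * (7 * R^6 / 60)"
proof -
  have integrand: "r * (t * (2*R*r - 3*r\<^sup>2))\<^sup>2 + (t * (r\<^sup>2 * (R - r)))\<^sup>2 / r
      = t\<^sup>2 * (5*R\<^sup>2*r^3 - 14*R*r^4 + 10*r^5)" for r
    by (cases "r = 0") (simp_all add: field_simps eval_nat_numeral)
  have "(LINT r:{0<..<R}|lborel. t\<^sup>2 * (5*R\<^sup>2*r^3 - 14*R*r^4 + 10*r^5))
      = t\<^sup>2 * (5*R\<^sup>2*R^4/4 - 14*R*R^5/5 + 10*R^6/6)"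
    using assms
    by (subst set_integral_greaterThanLessThan_FTC
          [where F = "\<lambda>r. t\<^sup>2 * (5*R\<^sup>2*r^4/4 - 14*R*r^5/5 + 10*r^6/6)"])
      (auto intro!: continuous_intros derivative_eq_intros simp: algebra_simps)
  thus ?thesis
    unfolding normH2_def integrand by (simp add: field_simps eval_nat_numeral)
qed

lemma ln_cubic_profile_le:
  fixes \<alpha> R t r :: real
  assumes "\<alpha> > 0" "0 \<le> r" "r \<le> R"
  shows "ln (1 + \<alpha> * (t * (r\<^sup>2 * (R - r)))\<^sup>2) \<le> ln (1 + \<alpha> * R^6 * t\<^sup>2)"
proof -
  have "0 \<le> r\<^sup>2 * (R - r)" "r\<^sup>2 * (R - r) \<le> R^3"
    using assms(2,3) by (auto simp: power3_eq_cube power2_eq_square intro!: mult_mono)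
  hence "(r\<^sup>2 * (R - r))\<^sup>2 \<le> (R^3)\<^sup>2" by (intro power_mono)
  hence "\<alpha> * (t * (r\<^sup>2 * (R - r)))\<^sup>2 \<le> \<alpha> * R^6 * t\<^sup>2"
    using assms(1) by (simp add: power_mult_distrib power_mult[symmetric] mult_left_mono mult_ac)
  thus ?thesis using assms(1) by (simp add: add_pos_nonneg)
qed

lemma Ikappa_cubic_profile_le:
  fixes n :: int and \<alpha> \<kappa> R t :: real
  assumes "\<alpha> > 0" "R \<ge> 0"
  defines "D \<equiv> R^6 * ((1/\<alpha> - \<kappa>) * R\<^sup>2 / 84 - 1/10 - (real_of_int n)\<^sup>2 / 60)"
  shows "Ikappa n \<alpha> \<kappa> R (\<lambda>r. t * (r\<^sup>2 * (R - r))) (\<lambda>r. t * (2*R*r - 3*r\<^sup>2))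
    \<le> (R\<^sup>2 / \<alpha>\<^sup>2 * ln (1 + \<alpha> * R^6 * t\<^sup>2) - t\<^sup>2 * D) / 2"
proof -
  define N where "N = (real_of_int n)\<^sup>2"
  define c where "c = 1/\<alpha> - \<kappa>"
  define \<Lambda> where "\<Lambda> = ln (1 + \<alpha> * R^6 * t\<^sup>2)"
  \<comment> \<open>\<open>t\<^sup>2 P\<close> is the polynomial part \<open>r v\<^sup>2 + n\<^sup>2 u\<^sup>2/r - 2 (\<alpha>\<^sup>-\<^sup>1 - \<kappa>) r u\<^sup>2\<close> of the integrand.\<close>
  define P where "P r = 4*R\<^sup>2*r^3 - 12*R*r^4 + 9*r^5 + N*(R\<^sup>2*r^3 - 2*R*r^4 + r^5)
      - 2*c*(R\<^sup>2*r^5 - 2*R*r^6 + r^7)" for r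
  let ?u = "\<lambda>r. t * (r\<^sup>2 * (R - r))"
  define h where "h r = t\<^sup>2 * P r + 2 / \<alpha>\<^sup>2 * r * ln (1 + \<alpha> * (?u r)\<^sup>2)" for r
  define g where "g r = t\<^sup>2 * P r + 2 / \<alpha>\<^sup>2 * r * \<Lambda>" for r
  have log_arg_pos: "1 + \<alpha> * (?u r)\<^sup>2 > 0" for r
    using assms(1) by (simp add: add_pos_nonneg)
  have h_le_g: "h r \<le> g r" if "r \<in> {0<..<R}" for r
    using ln_cubic_profile_le[OF assms(1), of r R t] that assms(1)
    unfolding h_def g_def \<Lambda>_def by (simp add: mult_left_mono divide_right_mono)
  have "set_integrable lborel {0<..<R} h"
    unfolding h_def P_def using log_arg_pos
    by (intro set_integrable_greaterThanLessThan continuous_intros) (metis less_irrefl)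
  moreover have "set_integrable lborel {0<..<R} g"
    unfolding g_def P_def by (intro set_integrable_greaterThanLessThan continuous_intros)
  ultimately have "(LINT r:{0<..<R}|lborel. h r) \<le> (LINT r:{0<..<R}|lborel. g r)"
    using h_le_g by (rule set_integral_mono)
  also have "(LINT r:{0<..<R}|lborel. g r) = R\<^sup>2 / \<alpha>\<^sup>2 * \<Lambda> - t\<^sup>2 * D"
  proof -
    have powers: "R\<^sup>2*R^4 = R^6" "R*R^5 = R^6" "R\<^sup>2*R^6 = R^8" "R*R^7 = R^8"
      by (simp_all add: power_add[symmetric] flip: power_Suc)
    show ?thesis
      unfolding g_def P_def using assms(1,2)
      apply (subst set_integral_greaterThanLessThan_FTC[where F = "\<lambda>r. t\<^sup>2 * (R\<^sup>2*r^4 - 12*R*r^5/5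
          + 3*r^6/2 + N*(R\<^sup>2*r^4/4 - 2*R*r^5/5 + r^6/6) - 2*c*(R\<^sup>2*r^6/6 - 2*R*r^7/7 + r^8/8))
          + \<Lambda>*r\<^sup>2/\<alpha>\<^sup>2"])
         apply (auto intro!: continuous_intros derivative_eq_intros)
       apply (simp add: field_simps eval_nat_numeral)
      by (simp add: D_def N_def c_def powers field_simps) (simp only: powers(2,4)[symmetric] mult_ac)
  qed
  finally have "(LINT r:{0<..<R}|lborel. h r) \<le> R\<^sup>2 / \<alpha>\<^sup>2 * \<Lambda> - t\<^sup>2 * D" .
  moreover have "Ikappa n \<alpha> \<kappa> R ?u (\<lambda>r. t * (2*R*r - 3*r\<^sup>2)) = (LINT r:{0<..<R}|lborel. h r) / 2"
  proof -
    have "r * (t * (2*R*r - 3*r\<^sup>2))\<^sup>2 + (real_of_int n)\<^sup>2 / r * (?u r)\<^sup>2 - 2 * (1/\<alpha> - \<kappa>) * r * (?u r)\<^sup>2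
        + 2 * (1/\<alpha>\<^sup>2) * r * ln (1 + \<alpha> * (?u r)\<^sup>2) = h r" for r
      unfolding h_def P_def c_def N_def
      by (cases "r = 0") (simp_all add: field_simps eval_nat_numeral)
    thus ?thesis unfolding Ikappa_def by simp
  qed
  ultimately show ?thesis unfolding \<Lambda>_def by simp
qed

lemma eventually_log_less_quadratic_at_top:
  fixes b K L D :: real
  assumes "K \<ge> 0" "L \<ge> 0" "D > 0"
  shows "eventually (\<lambda>t. b + K * ln (1 + L * t\<^sup>2) < t\<^sup>2 * D) at_top"
proof (rule eventually_at_top_linorder[THEN iffD2], intro exI allI impI)
  fix t :: real
  define C where "C = \<bar>b\<bar> + K * (ln (1 + L) + 2)"
  assume t: "t \<ge> max 1 (C / D + 1)"
  have "1 + L * t\<^sup>2 \<le> (1 + L) * (1 + t)\<^sup>2"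
    using assms(2) t by (simp add: algebra_simps power2_eq_square)
  hence "ln (1 + L * t\<^sup>2) \<le> ln ((1 + L) * (1 + t)\<^sup>2)"
    using assms(2) by (intro ln_mono) (auto intro: add_pos_nonneg)
  also have "\<dots> = ln (1 + L) + 2 * ln (1 + t)"
    using assms(2) t by (simp add: ln_mult ln_realpow)
  also have "\<dots> \<le> (ln (1 + L) + 2) * t"
    using t assms(2) ln_add_one_self_le_self[of t] mult_left_mono[of 1 t "ln (1 + L)"]
    by (simp add: algebra_simps)
  finally have "K * ln (1 + L * t\<^sup>2) \<le> K * ((ln (1 + L) + 2) * t)"
    using assms(1) by (rule mult_left_mono)
  moreover have "b \<le> \<bar>b\<bar> * t"
    using t mult_left_mono[of 1 t "\<bar>b\<bar>"] by linarith
  ultimately have "b + K * ln (1 + L * t\<^sup>2) \<le> \<bar>b\<bar> * t + K * ((ln (1 + L) + 2) * t)"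
    by linarith
  also have "\<dots> = C * t" by (simp add: C_def algebra_simps)
  also have "\<dots> < t * D * t"
    using t assms(3) by (intro mult_strict_right_mono) (auto simp: field_simps)
  finally show "b + K * ln (1 + L * t\<^sup>2) < t\<^sup>2 * D"
    by (simp add: power2_eq_square mult_ac)
qed

lemma R_bound_imp_cubic_profile_coefficient_pos:
  fixes n :: int
  assumes "\<kappa> < 1/\<alpha>"
    and "R > sqrt (12 * (1 + (real_of_int n)\<^sup>2 * (2 * ln 2 - 1)) / (1/\<alpha> - \<kappa>))"
  shows "R > 0" "(1/\<alpha> - \<kappa>) * R\<^sup>2 / 84 - 1/10 - (real_of_int n)\<^sup>2 / 60 > 0"
proof -
  define c where "c = 1/\<alpha> - \<kappa>"
  define N where "N = (real_of_int n)\<^sup>2"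
  have c: "c > 0" and N: "N \<ge> 0" using assms(1) by (simp_all add: c_def N_def)
  have "N * (1/3) \<le> N * (2 * ln 2 - 1)"
    using N ln2_ge_two_thirds by (intro mult_left_mono) auto
  hence bound: "12 + 4 * N \<le> 12 * (1 + N * (2 * ln 2 - 1))" by simp
  hence bound_nonneg: "12 * (1 + N * (2 * ln 2 - 1)) / c \<ge> 0" using c N by simp
  have R_gt: "R > sqrt (12 * (1 + N * (2 * ln 2 - 1)) / c)"
    using assms(2) by (simp add: c_def N_def)
  thus "R > 0" using bound_nonneg by (meson order.strict_trans1 real_sqrt_ge_zero)
  have "(sqrt (12 * (1 + N * (2 * ln 2 - 1)) / c))\<^sup>2 < R\<^sup>2"
    using R_gt bound_nonneg by (intro power_strict_mono) auto
  hence "12 * (1 + N * (2 * ln 2 - 1)) < c * R\<^sup>2"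
    using bound_nonneg c by (simp add: field_simps)
  with bound N show "(1/\<alpha> - \<kappa>) * R\<^sup>2 / 84 - 1/10 - (real_of_int n)\<^sup>2 / 60 > 0"
    unfolding c_def[symmetric] N_def[symmetric] by linarith
qed

theorem lemma2p2:
  fixes n :: int and \<alpha> \<kappa> \<beta> R :: real
  assumes "\<bar>n\<bar> \<ge> 1" and "\<alpha> > 0" and "\<kappa> < 1/\<alpha>" and "\<beta> > 0"
    and "R > sqrt (12 * (1 + (real_of_int n)^2 * (2 * ln 2 - 1)) / (1/\<alpha> - \<kappa>))"
  shows "\<exists>u v. inH R u v \<and> normH2 R u v > \<beta> \<and> Ikappa n \<alpha> \<kappa> R u v < 0"
proof -
  define D where "D = R^6 * ((1/\<alpha> - \<kappa>) * R\<^sup>2 / 84 - 1/10 - (real_of_int n)\<^sup>2 / 60)"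
  have R: "R > 0" and "D > 0"
    using R_bound_imp_cubic_profile_coefficient_pos[OF assms(3,5)] by (simp_all add: D_def)
  have "eventually (\<lambda>t. \<beta> < t\<^sup>2 * (7 * R^6 / 60)) at_top"
    using eventually_log_less_quadratic_at_top[of 0 0 "7 * R^6 / 60" \<beta>] R by simp
  moreover have "eventually (\<lambda>t. R\<^sup>2 / \<alpha>\<^sup>2 * ln (1 + \<alpha> * R^6 * t\<^sup>2) < t\<^sup>2 * D) at_top"
    using eventually_log_less_quadratic_at_top[of "R\<^sup>2 / \<alpha>\<^sup>2" "\<alpha> * R^6" D 0] \<open>D > 0\<close> assms(2)
    by (simp add: mult.assoc)
  ultimately have "eventually (\<lambda>t. \<beta> < t\<^sup>2 * (7 * R^6 / 60)
      \<and> R\<^sup>2 / \<alpha>\<^sup>2 * ln (1 + \<alpha> * R^6 * t\<^sup>2) < t\<^sup>2 * D) at_top"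
    by (rule eventually_conj)
  then obtain t where norm_large: "\<beta> < t\<^sup>2 * (7 * R^6 / 60)"
    and log_small: "R\<^sup>2 / \<alpha>\<^sup>2 * ln (1 + \<alpha> * R^6 * t\<^sup>2) < t\<^sup>2 * D"
    by (auto simp: eventually_at_top_linorder)
  show ?thesis
  proof (intro exI conjI)
    show "inH R (\<lambda>r. t * (r\<^sup>2 * (R - r))) (\<lambda>r. t * (2*R*r - 3*r\<^sup>2))"
      by (rule inH_cubic_profile)
    show "\<beta> < normH2 R (\<lambda>r. t * (r\<^sup>2 * (R - r))) (\<lambda>r. t * (2*R*r - 3*r\<^sup>2))"
      unfolding normH2_cubic_profile[OF less_imp_le[OF R]] by (rule norm_large)
    show "Ikappa n \<alpha> \<kappa> R (\<lambda>r. t * (r\<^sup>2 * (R - r))) (\<lambda>r. t * (2*R*r - 3*r\<^sup>2)) < 0"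
      using log_small
      by (intro order.strict_trans1[OF Ikappa_cubic_profile_le[OF assms(2) less_imp_le[OF R]]])
        (simp add: D_def)
  qed
qed

end
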